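(* Let $q=5$, $m\geq 2$ and $n=\frac{q^m-1}{2}$. Then the negacyclic BCH code $\mathcal{C}_{(q,n,4,0)}$, whose generator polynomial is $\mathbb{M}_{\beta}(x)\mathbb{M}_{\beta^3}(x)$, has parameters $[n,n-2m,4]$ and is distance-optimal with respect to the sphere-packing bound.
   Context: Let $\ell$ be the order of $q$ modulo $2n$, $\alpha$ a primitive element of $\mathrm{GF}(q^\ell)$, $\beta=\alpha^{(q^\ell-1)/(2n)}$ (a primitive $2n$-th root of unity), and $\mathbb{M}_{\beta^j}(x)$ the minimal polynomial of $\beta^j$ over $\mathrm{GF}(q)$. $\mathcal{C}_{(q,n,4,0)}$ is the negacyclic code of length $n$ over $\mathrm{GF}(q)$, i.e. the ideal of $\mathrm{GF}(q)[x]/(x^n+1)$ generated by $\mathrm{lcm}(\mathbb{M}_{\beta}(x),\mathbb{M}_{\beta^3}(x),\mathbb{M}_{\beta^5}(x))$. An $[n,k,d]$ code over $\mathrm{GF}(q)$ is distance-optimal with respect to the sphere-packing bound if the sphere-packing bound shows that no $[n,k,d+1]$ linear code over $\mathrm{GF}(q)$ exists. *)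

theory Defs
  imports "HOL-Computational_Algebra.Polynomial" "HOL-Computational_Algebra.Polynomial_Factorial" "HOL-Computational_Algebra.Euclidean_Algorithm"
begin

definition field_embedding :: "('f::field \<Rightarrow> 'e::field) \<Rightarrow> bool" where
  "field_embedding emb \<longleftrightarrow> emb 0 = 0 \<and> emb 1 = 1 \<and>
     (\<forall>a b. emb (a + b) = emb a + emb b) \<and> (\<forall>a b. emb (a * b) = emb a * emb b)"

definition primitive_root_of_unity :: "nat \<Rightarrow> 'e::field \<Rightarrow> bool" where
  "primitive_root_of_unity N b \<longleftrightarrow> 0 < N \<and> b ^ N = 1 \<and> (\<forall>j. 0 < j \<and> j < N \<longrightarrow> b ^ j \<noteq> 1)"

definition minimal_poly :: "('f::field \<Rightarrow> 'e::field) \<Rightarrow> 'e \<Rightarrow> 'f poly" where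
  "minimal_poly emb \<gamma> = (THE p. lead_coeff p = 1 \<and> poly (map_poly emb p) \<gamma> = 0 \<and>
      (\<forall>r. r \<noteq> 0 \<and> poly (map_poly emb r) \<gamma> = 0 \<longrightarrow> degree p \<le> degree r))"

(* the negacyclic code of length n generated by g: the ideal (g) of F[x]/(x^n+1),
   elements represented by their reduced polynomials of degree < n *)
definition negacyclic_code :: "nat \<Rightarrow> 'f::field poly \<Rightarrow> 'f poly set" where
  "negacyclic_code n g = {(a * g) mod (monom 1 n + 1) | a. True}"

definition C_q_n_4_0 :: "('f::field_gcd \<Rightarrow> 'e::field) \<Rightarrow> 'e \<Rightarrow> nat \<Rightarrow> 'f poly set" where
  "C_q_n_4_0 emb \<beta> n = negacyclic_code n
     (lcm (lcm (minimal_poly emb \<beta>) (minimal_poly emb (\<beta> ^ 3))) (minimal_poly emb (\<beta> ^ 5)))"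

(* Hamming weight / distance of words of length n represented as polynomials of degree < n *)
definition hamming_weight :: "'f::zero poly \<Rightarrow> nat" where
  "hamming_weight c = card {i. coeff c i \<noteq> 0}"

definition hamming_dist :: "'f::ab_group_add poly \<Rightarrow> 'f poly \<Rightarrow> nat" where
  "hamming_dist c c' = hamming_weight (c - c')"

definition minimum_distance :: "'f::ab_group_add poly set \<Rightarrow> nat" where
  "minimum_distance C = Min {hamming_dist c c' | c c'. c \<in> C \<and> c' \<in> C \<and> c \<noteq> c'}"

definition linear_code_params :: "'f::field poly set \<Rightarrow> nat \<Rightarrow> nat \<Rightarrow> nat \<Rightarrow> bool" where
  "linear_code_params C n k d \<longleftrightarrow>
     C \<subseteq> {c. degree c < n} \<and> module.subspace smult C \<and>
     vector_space.dim smult C = k \<and> minimum_distance C = d"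

definition sphere_packing_bound_holds :: "nat \<Rightarrow> nat \<Rightarrow> nat \<Rightarrow> nat \<Rightarrow> bool" where
  "sphere_packing_bound_holds q n k d \<longleftrightarrow>
     q ^ k * (\<Sum>i\<le>(d - 1) div 2. (n choose i) * (q - 1) ^ i) \<le> q ^ n"

definition sphere_packing_distance_optimal :: "nat \<Rightarrow> nat \<Rightarrow> nat \<Rightarrow> nat \<Rightarrow> bool" where
  "sphere_packing_distance_optimal q n k d \<longleftrightarrow> \<not> sphere_packing_bound_holds q n k (d + 1)"

end

theory Submission
  imports Defs "HOL-Computational_Algebra.Primes" "HOL-Library.FuncSet"
begin

text \<open>
  Over GF(5) the conjugates of an element x are the powers x^(5^j). Since beta has order
  2n = 5^m - 1, the 2m conjugates beta^(5^j) and beta^(3*5^j), j < m, are pairwise distinct, so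
  the minimal polynomials of beta and beta^3 have degree m and are coprime, while beta^5 is a
  conjugate of beta; the generator is therefore their product, of degree 2m.
  If a nonzero codeword had at most three nonzero coefficients c_i, the numbers emb c_i * beta^i
  would be a nontrivial solution of the Vandermonde system saying that beta, beta^3 and beta^5
  are roots; hence the minimum distance is at least 4. Conversely,
  5^(2m) = (2n+1)^2 < 1 + 4n + 16 (n choose 2), the volume of a Hamming ball of radius 2, so two
  words of that ball are congruent modulo the generator and their difference is a codeword of
  weight at most 4. The same inequality says that the sphere-packing bound rules out distance 5.
\<close>

locale field_extension =
  fixes emb :: "'f::field \<Rightarrow> 'e::field"
  assumes field_embedding: "field_embedding emb"
begin

lemma emb_0 [simp]: "emb 0 = 0"
  and emb_1 [simp]: "emb 1 = 1"
  and emb_add [simp]: "emb (a + b) = emb a + emb b"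
  and emb_mult [simp]: "emb (a * b) = emb a * emb b"
  using field_embedding unfolding field_embedding_def by auto

lemma emb_minus [simp]: "emb (- a) = - emb a"
  by (metis emb_0 emb_add eq_neg_iff_add_eq_0)

lemma emb_diff [simp]: "emb (a - b) = emb a - emb b"
  by (metis diff_conv_add_uminus emb_add emb_minus)

lemma emb_power [simp]: "emb (a ^ k) = emb a ^ k"
  by (induction k) simp_all

lemma emb_of_nat [simp]: "emb (of_nat k) = of_nat k"
  by (induction k) simp_all

lemma emb_eq_0_iff [simp]: "emb a = 0 \<longleftrightarrow> a = 0"
proof
  assume "emb a = 0"
  show "a = 0"
  proof (rule ccontr)
    assume "a \<noteq> 0"
    then have "emb a * emb (inverse a) = 1"
      by (simp flip: emb_mult)
    with \<open>emb a = 0\<close> show False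
      by simp
  qed
qed simp

lemma inj_emb: "inj emb"
  by (rule injI) (metis emb_diff emb_eq_0_iff right_minus_eq)

lemma emb_eq_1_iff [simp]: "emb a = 1 \<longleftrightarrow> a = 1"
  using inj_emb emb_1 by (metis injD)

lemma degree_map_poly_emb [simp]: "degree (map_poly emb p) = degree p"
  by (simp add: degree_map_poly)

lemma map_poly_emb_eq_0_iff [simp]: "map_poly emb p = 0 \<longleftrightarrow> p = 0"
  by (simp add: map_poly_eq_0_iff)

lemma coeff_map_poly_emb [simp]: "coeff (map_poly emb p) i = emb (coeff p i)"
  by (simp add: coeff_map_poly)

lemma map_poly_emb_add: "map_poly emb (p + q) = map_poly emb p + map_poly emb q"
  by (intro poly_eqI) (simp add: coeff_map_poly)

lemma map_poly_emb_mult: "map_poly emb (p * q) = map_poly emb p * map_poly emb q"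
proof (induction p)
  case (pCons a p)
  then show ?case
    by (simp add: map_poly_pCons map_poly_emb_add map_poly_smult)
qed simp

lemma map_poly_emb_diff: "map_poly emb (p - q) = map_poly emb p - map_poly emb q"
  by (intro poly_eqI) (simp add: coeff_map_poly)

lemma map_poly_emb_prod: "map_poly emb (\<Prod>x\<in>A. f x) = (\<Prod>x\<in>A. map_poly emb (f x))"
  by (induction A rule: infinite_finite_induct) (simp_all add: map_poly_emb_mult)

lemma emb_poly: "emb (poly p x) = poly (map_poly emb p) (emb x)"
  by (induction p) (simp_all add: map_poly_pCons)

lemma in_range_map_poly_emb:
  assumes "\<And>i. coeff F i \<in> range emb"
  shows "F \<in> range (map_poly emb)"
proof (rule range_eqI)
  have inv_0: "inv emb 0 = 0"
    by (metis emb_0 inj_emb inv_f_f)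
  show "F = map_poly emb (map_poly (inv emb) F)"
    by (rule poly_eqI) (simp add: coeff_map_poly inv_0 f_inv_into_f[OF assms])
qed

abbreviation aeval :: "'f poly \<Rightarrow> 'e \<Rightarrow> 'e" where
  "aeval p x \<equiv> poly (map_poly emb p) x"

lemma aeval_mult [simp]: "aeval (p * q) x = aeval p x * aeval q x"
  by (simp add: map_poly_emb_mult)

lemma aeval_mod_eq_0:
  assumes "aeval p x = 0" "aeval q x = 0"
  shows "aeval (p mod q) x = 0"
proof -
  have "map_poly emb p = map_poly emb (p div q) * map_poly emb q + map_poly emb (p mod q)"
    by (metis div_mult_mod_eq map_poly_emb_add map_poly_emb_mult)
  then show ?thesis
    using assms by (metis add_0 mult_zero_right poly_add poly_mult)
qed

lemma card_roots_le_degree: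
  assumes "r \<noteq> 0" "\<And>z. z \<in> Z \<Longrightarrow> aeval r z = 0"
  shows "card Z \<le> degree r"
proof -
  have nonzero: "map_poly emb r \<noteq> 0"
    using assms(1) by simp
  have "card Z \<le> card {z. aeval r z = 0}"
    by (rule card_mono) (use poly_roots_finite[OF nonzero] assms(2) in auto)
  also have "\<dots> \<le> degree r"
    using card_poly_roots_bound[OF nonzero] by simp
  finally show ?thesis .
qed

text \<open>
  This is the predicate under the description operator in the definition of \<open>minimal_poly\<close>,
  which is therefore meaningful only for elements that are algebraic over the image of \<open>emb\<close>.
\<close>

definition is_minimal_poly :: "'e \<Rightarrow> 'f poly \<Rightarrow> bool" where
  "is_minimal_poly \<gamma> p \<longleftrightarrow> lead_coeff p = 1 \<and> aeval p \<gamma> = 0 \<and>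
     (\<forall>r. r \<noteq> 0 \<and> aeval r \<gamma> = 0 \<longrightarrow> degree p \<le> degree r)"

lemma is_minimal_polyD:
  assumes "is_minimal_poly \<gamma> p"
  shows "lead_coeff p = 1" "p \<noteq> 0" "aeval p \<gamma> = 0"
    and "r \<noteq> 0 \<Longrightarrow> aeval r \<gamma> = 0 \<Longrightarrow> degree p \<le> degree r"
  using assms unfolding is_minimal_poly_def by auto

lemma minimal_poly_cong:
  assumes "\<And>r. aeval r \<gamma> = 0 \<longleftrightarrow> aeval r \<delta> = 0"
  shows "minimal_poly emb \<gamma> = minimal_poly emb \<delta>"
  unfolding minimal_poly_def using assms by simp

lemma is_minimal_poly_unique:
  assumes p: "is_minimal_poly \<gamma> p" and q: "is_minimal_poly \<gamma> q"
  shows "p = q"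
proof (rule ccontr)
  assume "p \<noteq> q"
  then have nonzero: "p - q \<noteq> 0"
    by simp
  have "degree p = degree q"
    using is_minimal_polyD[OF p] is_minimal_polyD[OF q] by (meson antisym)
  then have "coeff (p - q) (degree p) = 0" "degree (p - q) \<le> degree p"
    using is_minimal_polyD(1)[OF p] is_minimal_polyD(1)[OF q] by (simp_all add: degree_diff_le)
  then have "degree (p - q) < degree p"
    using nonzero by (metis le_neq_implies_less leading_coeff_0_iff)
  moreover have "aeval (p - q) \<gamma> = 0"
    using is_minimal_polyD(3)[OF p] is_minimal_polyD(3)[OF q] by (simp add: map_poly_emb_diff)
  ultimately show False
    using is_minimal_polyD(4)[OF p nonzero] by simp
qed

lemma minimal_poly_eqI: "is_minimal_poly \<gamma> p \<Longrightarrow> minimal_poly emb \<gamma> = p"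
  unfolding minimal_poly_def
  by (rule the_equality) (auto simp: is_minimal_poly_def intro: is_minimal_poly_unique)

lemma is_minimal_poly_minimal_poly:
  assumes "r \<noteq> 0" "aeval r \<gamma> = 0"
  shows "is_minimal_poly \<gamma> (minimal_poly emb \<gamma>)"
proof -
  define d where "d = (LEAST d. \<exists>r. r \<noteq> 0 \<and> aeval r \<gamma> = 0 \<and> degree r = d)"
  have "\<exists>r. r \<noteq> 0 \<and> aeval r \<gamma> = 0 \<and> degree r = d"
    unfolding d_def by (rule LeastI_ex) (use assms in blast)
  then obtain r0 where r0: "r0 \<noteq> 0" "aeval r0 \<gamma> = 0" "degree r0 = d"
    by blast
  have least: "d \<le> degree s" if "s \<noteq> 0" "aeval s \<gamma> = 0" for s
    unfolding d_def by (rule Least_le) (use that in auto)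
  have "lead_coeff r0 \<noteq> 0"
    using r0(1) by simp
  then have "is_minimal_poly \<gamma> (smult (inverse (lead_coeff r0)) r0)"
    unfolding is_minimal_poly_def using r0 least by (simp add: map_poly_smult)
  then show ?thesis
    by (simp add: minimal_poly_eqI)
qed

lemma is_minimal_poly_dvd:
  assumes "is_minimal_poly \<gamma> M" "aeval r \<gamma> = 0"
  shows "M dvd r"
proof -
  have "aeval (r mod M) \<gamma> = 0"
    using aeval_mod_eq_0 assms is_minimal_polyD(3) by blast
  then have "r mod M = 0"
    using is_minimal_polyD(2,4)[OF assms(1)] degree_mod_less' leD by blast
  then show ?thesis
    by (simp add: mod_eq_0_iff_dvd)
qed

lemma is_minimal_poly_divisor_root:
  assumes "is_minimal_poly \<gamma> M" "d dvd M" "\<not> is_unit d"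
  shows "aeval d \<gamma> = 0"
proof (rule ccontr)
  assume d_nonroot: "aeval d \<gamma> \<noteq> 0"
  obtain e where M: "M = d * e"
    using assms(2) by blast
  have "d \<noteq> 0" "e \<noteq> 0"
    using M is_minimal_polyD(2)[OF assms(1)] by auto
  moreover have "aeval e \<gamma> = 0"
    using M d_nonroot is_minimal_polyD(3)[OF assms(1)] by simp
  ultimately have "degree d + degree e \<le> degree e"
    using is_minimal_polyD(4)[OF assms(1), of e] M by (simp add: degree_mult_eq)
  then show False
    using assms(3) \<open>d \<noteq> 0\<close> by (simp add: is_unit_iff_degree)
qed

end

lemma of_nat_card_eq_0: "of_nat (card (UNIV :: 'a::{ring_1,finite} set)) = (0::'a)"
proof -
  have "(\<Sum>x\<in>UNIV. x + 1) = (\<Sum>x\<in>(UNIV::'a set). x)"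
    by (rule sum.reindex_bij_witness[of _ "\<lambda>x. x - 1" "\<lambda>x. x + 1"]) auto
  then show ?thesis
    by (simp add: sum.distrib)
qed

lemma power_card_eq_self: "(x::'a::{field,finite}) ^ card (UNIV :: 'a set) = x"
proof (cases "x = 0")
  case False
  define U where "U = (UNIV :: 'a set) - {0}"
  have "(\<Prod>y\<in>U. x * y) = (\<Prod>y\<in>U. y)"
    unfolding U_def by (rule prod.reindex_bij_witness[of _ "\<lambda>y. y / x" "\<lambda>y. x * y"]) (use False in auto)
  then have "x ^ card U = 1"
    by (simp add: prod.distrib U_def)
  moreover have "card (UNIV :: 'a set) = Suc (card U)"
    unfolding U_def by (simp add: card_Diff_singleton Suc_diff_1 finite_UNIV_card_ge_0)
  ultimately show ?thesis
    by simp
qed (simp add: finite_UNIV_card_ge_0)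

locale prime_field_extension = field_extension emb
  for emb :: "'f::{field,finite} \<Rightarrow> 'e::field" +
  fixes p :: nat
  assumes card_base_field: "card (UNIV :: 'f set) = p"
    and prime_card: "prime p"
begin

lemma p_pos: "0 < p"
  using prime_card by (rule prime_gt_0_nat)

lemma CHAR_extension: "CHAR('e) = p"
proof -
  have "of_nat p = (0::'f)"
    using of_nat_card_eq_0[where 'a='f] card_base_field by simp
  then have "of_nat p = (0::'e)"
    by (metis emb_of_nat emb_0)
  then have "CHAR('e) dvd p"
    by (simp add: of_nat_eq_0_iff_char_dvd)
  moreover have "CHAR('e) \<noteq> 1"
    using of_nat_CHAR[where 'a='e] by auto
  ultimately show ?thesis
    using prime_card by (auto simp: prime_nat_iff)
qed

lemma frobenius_add: "(x + y) ^ p = x ^ p + (y::'e) ^ p"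
  using freshmans_dream[where x=x and y=y] CHAR_extension prime_card by simp

sublocale frobenius: field_extension "\<lambda>x::'e. x ^ p"
  by unfold_locales (use p_pos in \<open>simp add: field_embedding_def frobenius_add power_mult_distrib\<close>)

lemma emb_power_card: "emb a ^ p = emb a"
  using power_card_eq_self[of a] card_base_field by (metis emb_power)

lemma range_emb: "range emb = {x. x ^ p = x}"
proof (rule card_seteq)
  define X :: "'e poly" where "X = monom 1 p - [:0, 1:]"
  have p_ge_2: "p \<ge> 2"
    using prime_card by (simp add: prime_ge_2_nat)
  then have "coeff X p = 1"
    by (simp add: X_def coeff_eq_0)
  then have "X \<noteq> 0"
    by auto
  moreover have roots: "{x. poly X x = 0} = {x. x ^ p = x}"
    by (auto simp: X_def poly_monom)
  moreover have "degree X \<le> p"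
    unfolding X_def using p_ge_2 by (intro degree_diff_le) (auto simp: degree_monom_le)
  ultimately show "finite {x::'e. x ^ p = x}" "card {x::'e. x ^ p = x} \<le> card (range emb)"
    using poly_roots_finite[of X] card_poly_roots_bound[of X]
    by (simp_all add: card_image[OF inj_emb] card_base_field)
  show "range emb \<subseteq> {x. x ^ p = x}"
    using emb_power_card by auto
qed

lemma aeval_frobenius: "aeval r (x ^ p) = aeval r x ^ p"
proof -
  have "map_poly (\<lambda>y. y ^ p) (map_poly emb r) = map_poly emb r"
    using p_pos by (intro poly_eqI) (simp add: coeff_map_poly emb_power_card)
  then show ?thesis
    using frobenius.emb_poly[of "map_poly emb r" x] by simp
qed

lemma aeval_frobenius_iterate: "aeval r (x ^ p ^ j) = aeval r x ^ p ^ j"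
proof (induction j)
  case (Suc j)
  then show ?case
    using aeval_frobenius[of r "x ^ p ^ j"] by (simp add: power_mult mult.commute)
qed simp

lemma conjugate_root: "aeval r x = 0 \<Longrightarrow> aeval r (x ^ p ^ j) = 0"
  using p_pos by (simp add: aeval_frobenius_iterate)

lemma exists_monic_poly_vanishing_at:
  assumes "\<gamma> ^ p ^ k = \<gamma>" "0 < k"
  shows "\<exists>G. lead_coeff G = 1 \<and> degree G = k \<and> aeval G \<gamma> = 0"
proof -
  define h where "h j = [:- (\<gamma> ^ p ^ j), 1:]" for j
  define F where "F = (\<Prod>j<k. h j)"
  \<comment> \<open>Frobenius permutes the factors of \<open>F\<close> cyclically, so the coefficients of \<open>F\<close> lie in \<open>range emb\<close>.\<close>
  obtain k' where k: "k = Suc k'"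
    using assms(2) gr0_implies_Suc by blast
  have frobenius_h: "map_poly (\<lambda>x. x ^ p) (h j) = h (Suc j)" for j
    using p_pos by (simp add: h_def map_poly_pCons power_mult[symmetric] mult.commute)
  have "map_poly (\<lambda>x. x ^ p) F = (\<Prod>j<k. h (Suc j))"
    unfolding F_def frobenius.map_poly_emb_prod frobenius_h ..
  also have "\<dots> = (\<Prod>j<k'. h (Suc j)) * h 0"
    using assms(1) by (simp add: k h_def)
  also have "\<dots> = F"
    unfolding F_def k prod.lessThan_Suc_shift by (simp add: mult.commute)
  finally have "map_poly (\<lambda>x. x ^ p) F = F" .
  then have "coeff F i ^ p = coeff F i" for i
    using p_pos by (metis coeff_map_poly zero_power)
  then obtain G where G: "F = map_poly emb G"
    using in_range_map_poly_emb[of F] range_emb by blast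
  have "degree F = k"
    unfolding F_def by (simp add: degree_prod_sum_eq h_def)
  moreover have "lead_coeff F = 1"
    unfolding F_def lead_coeff_prod by (simp add: h_def)
  moreover have "poly F \<gamma> = 0"
    unfolding F_def poly_prod using assms(2) by (auto simp: h_def intro!: bexI[of _ 0])
  ultimately show ?thesis
    using G by auto
qed

lemma minimal_poly_degree_le:
  assumes "\<gamma> ^ p ^ k = \<gamma>" "0 < k"
  shows "is_minimal_poly \<gamma> (minimal_poly emb \<gamma>)" "degree (minimal_poly emb \<gamma>) \<le> k"
proof -
  obtain G where G: "lead_coeff G = 1" "degree G = k" "aeval G \<gamma> = 0"
    using exists_monic_poly_vanishing_at[OF assms] by blast
  then have "G \<noteq> 0"
    by auto
  with G show "is_minimal_poly \<gamma> (minimal_poly emb \<gamma>)"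
    using is_minimal_poly_minimal_poly by blast
  with G \<open>G \<noteq> 0\<close> show "degree (minimal_poly emb \<gamma>) \<le> k"
    using is_minimal_polyD(4) by fastforce
qed

lemma degree_minimal_poly:
  assumes "\<gamma> ^ p ^ k = \<gamma>" "0 < k" "inj_on (\<lambda>j. \<gamma> ^ p ^ j) {..<k}"
  shows "degree (minimal_poly emb \<gamma>) = k"
proof -
  note M = minimal_poly_degree_le[OF assms(1,2)]
  have "card ((\<lambda>j. \<gamma> ^ p ^ j) ` {..<k}) \<le> degree (minimal_poly emb \<gamma>)"
    using is_minimal_polyD(2,3)[OF M(1)] by (intro card_roots_le_degree) (auto intro: conjugate_root)
  then show ?thesis
    using M(2) card_image[OF assms(3)] by simp
qed

end

lemma degree_negacyclic_modulus: "0 < n \<Longrightarrow> degree (monom 1 n + 1 :: 'a::field poly) = n"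
  by (subst degree_add_eq_left) (auto simp: degree_monom_eq)

lemma negacyclic_modulus_nonzero: "0 < n \<Longrightarrow> monom 1 n + 1 \<noteq> (0 :: 'a::field poly)"
  using degree_negacyclic_modulus[of n, where 'a='a] by fastforce

lemma negacyclic_code_eq_multiples:
  fixes g :: "'a::field poly"
  assumes "g dvd monom 1 n + 1" "0 < n"
  shows "negacyclic_code n g = {c. degree c < n \<and> g dvd c}"
proof (intro set_eqI iffI)
  fix c
  assume "c \<in> negacyclic_code n g"
  then obtain a where c: "c = (a * g) mod (monom 1 n + 1)"
    unfolding negacyclic_code_def by blast
  have "degree c < n"
  proof (cases "c = 0")
    case False
    then show ?thesis
      using degree_mod_less'[OF negacyclic_modulus_nonzero[OF assms(2)], of "a * g"]
      unfolding c degree_negacyclic_modulus[OF assms(2)] by simp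
  qed (simp add: assms(2))
  moreover have "g dvd c"
    unfolding c using assms(1) by (simp add: dvd_mod)
  ultimately show "c \<in> {c. degree c < n \<and> g dvd c}"
    by simp
next
  fix c
  assume "c \<in> {c. degree c < n \<and> g dvd c}"
  then obtain h where "c = h * g" "degree c < n"
    by (metis (mono_tags) dvdE mem_Collect_eq mult.commute)
  then have "c = (h * g) mod (monom 1 n + 1)"
    by (simp add: mod_poly_less degree_negacyclic_modulus[OF assms(2)])
  then show "c \<in> negacyclic_code n g"
    unfolding negacyclic_code_def by blast
qed

interpretation poly_vs: vector_space "smult :: 'a::field \<Rightarrow> 'a poly \<Rightarrow> 'a poly"
  by unfold_locales (simp_all add: smult_add_right smult_add_left)

lemma subspace_multiples:
  fixes g :: "'a::field poly"
  assumes "0 < n"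
  shows "poly_vs.subspace {c. degree c < n \<and> g dvd c}"
  unfolding poly_vs.subspace_def
  using assms by (auto intro: dvd_add dvd_smult le_less_trans[OF degree_add_le_max]
      le_less_trans[OF degree_smult_le])

lemma smult_mult_monom_1:
  fixes g :: "'a::comm_semiring_1 poly"
  shows "smult a (g * monom 1 i) = g * monom a i"
  by (simp add: smult_monom flip: mult_smult_right)

lemma inj_on_mult_monom_1:
  fixes g :: "'a::field poly"
  assumes "g \<noteq> 0"
  shows "inj_on (\<lambda>i. g * monom 1 i) A"
  by (rule inj_onI) (use assms in \<open>simp add: monom_eq_iff'\<close>)

lemma independent_mult_monom_1:
  fixes g :: "'a::field poly"
  assumes "g \<noteq> 0"
  shows "poly_vs.independent ((\<lambda>i. g * monom 1 i) ` {..<k})"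
proof -
  have "u (g * monom 1 i) = 0"
    if "(\<Sum>v\<in>(\<lambda>i. g * monom 1 i) ` {..<k}. smult (u v) v) = 0" "i < k" for u i
  proof -
    have "g * (\<Sum>j<k. monom (u (g * monom 1 j)) j) = 0"
      using that(1) by (simp add: sum.reindex[OF inj_on_mult_monom_1[OF assms]]
          smult_mult_monom_1 sum_distrib_left)
    then have "coeff (\<Sum>j<k. monom (u (g * monom 1 j)) j) i = 0"
      using assms by simp
    then show ?thesis
      using that(2) by (simp add: coeff_sum coeff_monom)
  qed
  then show ?thesis
    unfolding poly_vs.dependent_finite[OF finite_imageI[OF finite_lessThan]] by blast
qed

lemma multiples_subset_span_mult_monom_1:
  fixes g :: "'a::field poly"
  assumes "g \<noteq> 0"
  shows "{c. degree c < degree g + k \<and> g dvd c} \<subseteq> poly_vs.span ((\<lambda>i. g * monom 1 i) ` {..<k})"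
proof
  fix c
  assume "c \<in> {c. degree c < degree g + k \<and> g dvd c}"
  then obtain h where c: "c = g * h" "degree (g * h) < degree g + k"
    by blast
  then have "h = 0 \<or> degree h < k"
    using assms by (cases "h = 0") (auto simp: degree_mult_eq)
  then have "h = (\<Sum>i<k. monom (coeff h i) i)"
    by (intro poly_eqI) (auto simp: coeff_sum coeff_monom coeff_eq_0 not_less)
  then have "c = (\<Sum>i<k. smult (coeff h i) (g * monom 1 i))"
    unfolding c smult_mult_monom_1 by (metis sum_distrib_left)
  also have "\<dots> \<in> poly_vs.span ((\<lambda>i. g * monom 1 i) ` {..<k})"
    by (intro poly_vs.span_sum poly_vs.span_scale poly_vs.span_base) auto
  finally show "c \<in> poly_vs.span ((\<lambda>i. g * monom 1 i) ` {..<k})" .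
qed

lemma dim_multiples:
  fixes g :: "'a::field poly"
  assumes "g \<noteq> 0" "degree g \<le> n"
  shows "poly_vs.dim {c. degree c < n \<and> g dvd c} = n - degree g"
proof (rule poly_vs.dim_unique)
  show "(\<lambda>i. g * monom 1 i) ` {..<n - degree g} \<subseteq> {c. degree c < n \<and> g dvd c}"
    using assms by (auto simp: degree_mult_eq degree_monom_eq)
  show "{c. degree c < n \<and> g dvd c} \<subseteq> poly_vs.span ((\<lambda>i. g * monom 1 i) ` {..<n - degree g})"
    using multiples_subset_span_mult_monom_1[OF assms(1), of "n - degree g"] assms(2) by simp
  show "poly_vs.independent ((\<lambda>i. g * monom 1 i) ` {..<n - degree g})"
    using assms(1) by (rule independent_mult_monom_1)
  show "card ((\<lambda>i. g * monom 1 i) ` {..<n - degree g}) = n - degree g"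
    using card_image[OF inj_on_mult_monom_1[OF assms(1)]] by simp
qed

definition poly_support :: "'a::zero poly \<Rightarrow> nat set" where
  "poly_support c = {i. coeff c i \<noteq> 0}"

lemma hamming_weight_eq_card_poly_support: "hamming_weight c = card (poly_support c)"
  by (simp add: hamming_weight_def poly_support_def)

lemma poly_support_subset_lessThan:
  assumes "degree c < n"
  shows "poly_support c \<subseteq> {..<n}"
proof
  fix i
  assume "i \<in> poly_support c"
  then have "i \<le> degree c"
    by (simp add: poly_support_def le_degree)
  with assms show "i \<in> {..<n}"
    by simp
qed

lemma finite_poly_support: "finite (poly_support c)"
  using poly_support_subset_lessThan[of c "Suc (degree c)"] finite_subset by blast

lemma hamming_weight_le_length: "degree c < n \<Longrightarrow> hamming_weight c \<le> n"
  unfolding hamming_weight_eq_card_poly_support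
  using card_mono[OF finite_lessThan poly_support_subset_lessThan] by simp

lemma hamming_weight_diff_le:
  "hamming_weight (c - c') \<le> hamming_weight c + hamming_weight (c' :: 'a::ab_group_add poly)"
proof -
  have "poly_support (c - c') \<subseteq> poly_support c \<union> poly_support c'"
    by (auto simp: poly_support_def)
  then have "hamming_weight (c - c') \<le> card (poly_support c \<union> poly_support c')"
    unfolding hamming_weight_eq_card_poly_support by (intro card_mono) (simp_all add: finite_poly_support)
  also have "\<dots> \<le> hamming_weight c + hamming_weight c'"
    unfolding hamming_weight_eq_card_poly_support by (rule card_Un_le)
  finally show ?thesis .
qed

lemma minimum_distance_linear_code:
  fixes C :: "'a::field poly set"
  assumes "poly_vs.subspace C" "C \<subseteq> {c. degree c < n}"
    and "\<And>c. c \<in> C \<Longrightarrow> c \<noteq> 0 \<Longrightarrow> d \<le> hamming_weight c"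
    and "c \<in> C" "c \<noteq> 0" "hamming_weight c = d"
  shows "minimum_distance C = d"
  unfolding minimum_distance_def
proof (rule Min_eqI)
  let ?D = "{hamming_dist c c' |c c'. c \<in> C \<and> c' \<in> C \<and> c \<noteq> c'}"
  have diff: "c - c' \<in> C" if "c \<in> C" "c' \<in> C" for c c'
    using assms(1) that by (rule poly_vs.subspace_diff)
  have "?D \<subseteq> {..n}"
  proof
    fix y
    assume "y \<in> ?D"
    then obtain c c' where "y = hamming_weight (c - c')" "c - c' \<in> C"
      unfolding hamming_dist_def using diff by blast
    then show "y \<in> {..n}"
      using assms(2) hamming_weight_le_length by fastforce
  qed
  then show "finite ?D"
    by (rule finite_subset) simp
  show "d \<le> y" if "y \<in> ?D" for y
    using that diff assms(3) unfolding hamming_dist_def by fastforce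
  have "0 \<in> C"
    using assms(1) by (rule poly_vs.subspace_0)
  then show "d \<in> ?D"
    using assms(4-6) unfolding hamming_dist_def by force
qed

lemma inj_poly_support_coeffs:
  "inj (\<lambda>c :: 'a::zero poly. (poly_support c, restrict (coeff c) (poly_support c)))"
proof (rule injI, rule poly_eqI)
  fix c c' :: "'a poly" and k
  assume eq: "(poly_support c, restrict (coeff c) (poly_support c))
    = (poly_support c', restrict (coeff c') (poly_support c'))"
  have supp: "poly_support c = poly_support c'"
    using arg_cong[OF eq, of fst] by simp
  have restr: "restrict (coeff c) (poly_support c) = restrict (coeff c') (poly_support c')"
    using arg_cong[OF eq, of snd] by simp
  show "coeff c k = coeff c' k"
  proof (cases "k \<in> poly_support c")
    case True
    then show ?thesis
      using fun_cong[OF restr, of k] supp by simp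
  next
    case False
    then have "k \<notin> poly_support c'"
      using supp by simp
    with False show ?thesis
      by (simp add: poly_support_def)
  qed
qed

lemma poly_support_coeffs_image_hamming_sphere:
  assumes "0 < n"
  shows "(\<lambda>c. (poly_support c, restrict (coeff c) (poly_support c)))
           ` {c :: 'a::comm_monoid_add poly. degree c < n \<and> hamming_weight c = i}
         = (SIGMA B:{B. B \<subseteq> {..<n} \<and> card B = i}. B \<rightarrow>\<^sub>E (UNIV - {0}))"
    (is "?enc ` ?S = ?P")
proof (intro equalityI subsetI)
  fix x
  assume "x \<in> ?enc ` ?S"
  then show "x \<in> ?P"
    using poly_support_subset_lessThan
    by (auto simp: hamming_weight_eq_card_poly_support poly_support_def)
next
  fix x
  assume "x \<in> ?P"
  then obtain B f where x: "x = (B, f)" "B \<subseteq> {..<n}" "card B = i" "f \<in> B \<rightarrow>\<^sub>E (UNIV - {0})"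
    by blast
  define c where "c = (\<Sum>j\<in>B. monom (f j) j)"
  have coeff_c: "coeff c k = (if k \<in> B then f k else 0)" for k
    using x(2) unfolding c_def by (simp add: coeff_sum coeff_monom finite_subset)
  then have supp_c: "poly_support c = B"
    using x(4) by (auto simp: poly_support_def)
  have "degree c < n"
  proof (cases "c = 0")
    case False
    then have "degree c \<in> poly_support c"
      by (simp add: poly_support_def)
    then show ?thesis
      using supp_c x(2) by auto
  qed (use assms in simp)
  moreover have "restrict (coeff c) B = f"
    using x(4) coeff_c by (auto simp: PiE_def extensional_def)
  ultimately show "x \<in> ?enc ` ?S"
    using supp_c x(1,3) by (auto simp: hamming_weight_eq_card_poly_support intro!: image_eqI[of _ _ c])
qed

lemma card_hamming_sphere:
  assumes "0 < n"
  shows "card {c :: 'a::{comm_monoid_add,finite} poly. degree c < n \<and> hamming_weight c = i}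
           = (n choose i) * (card (UNIV :: 'a set) - 1) ^ i"
proof -
  let ?P = "SIGMA B:{B. B \<subseteq> {..<n} \<and> card B = i}. B \<rightarrow>\<^sub>E (UNIV - {0 :: 'a})"
  let ?enc = "\<lambda>c :: 'a poly. (poly_support c, restrict (coeff c) (poly_support c))"
  let ?S = "{c :: 'a poly. degree c < n \<and> hamming_weight c = i}"
  have "inj_on ?enc ?S"
    using inj_poly_support_coeffs by (rule inj_on_subset) simp
  then have "card ?S = card (?enc ` ?S)"
    by (simp add: card_image)
  also have "\<dots> = card ?P"
    unfolding poly_support_coeffs_image_hamming_sphere[OF assms] ..
  also have "\<dots> = (\<Sum>B\<in>{B. B \<subseteq> {..<n} \<and> card B = i}. card (B \<rightarrow>\<^sub>E (UNIV - {0 :: 'a})))"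
    by (rule card_SigmaI) (auto intro!: finite_PiE intro: finite_subset)
  also have "\<dots> = (\<Sum>B\<in>{B. B \<subseteq> {..<n} \<and> card B = i}. (card (UNIV :: 'a set) - 1) ^ i)"
    by (intro sum.cong) (auto simp: card_PiE card_Diff_singleton finite_subset)
  also have "\<dots> = (n choose i) * (card (UNIV :: 'a set) - 1) ^ i"
    by (simp add: n_subsets)
  finally show ?thesis .
qed

lemma inj_on_restrict_coeff:
  "inj_on (\<lambda>r. restrict (coeff r) {..<d}) {r :: 'a::zero poly. degree r < d}"
proof (rule inj_onI, rule poly_eqI)
  fix r r' :: "'a poly" and k
  assume "r \<in> {r. degree r < d}" "r' \<in> {r. degree r < d}"
    and eq: "restrict (coeff r) {..<d} = restrict (coeff r') {..<d}"
  show "coeff r k = coeff r' k"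
  proof (cases "k < d")
    case True
    then show ?thesis
      using fun_cong[OF eq, of k] by simp
  next
    case False
    with \<open>r \<in> _\<close> \<open>r' \<in> _\<close> show ?thesis
      by (simp add: coeff_eq_0)
  qed
qed

lemma restrict_coeff_in_PiE:
  "(\<lambda>r :: 'a::zero poly. restrict (coeff r) {..<d}) ` A \<subseteq> {..<d} \<rightarrow>\<^sub>E (UNIV :: 'a set)"
  unfolding image_subset_iff by simp

lemma finite_degree_less: "finite {r :: 'a::{zero,finite} poly. degree r < d}"
  by (rule inj_on_finite[OF inj_on_restrict_coeff restrict_coeff_in_PiE]) (simp add: finite_PiE)

lemma card_degree_less_le:
  "card {r :: 'a::{zero,finite} poly. degree r < d} \<le> card (UNIV :: 'a set) ^ d"
proof -
  have "card {r :: 'a poly. degree r < d} \<le> card ({..<d} \<rightarrow>\<^sub>E (UNIV :: 'a set))"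
    by (rule card_inj_on_le[OF inj_on_restrict_coeff restrict_coeff_in_PiE]) (simp add: finite_PiE)
  then show ?thesis
    by (simp add: card_PiE)
qed

lemma card_hamming_ball:
  assumes "0 < n"
  shows "card {c :: 'a::{comm_monoid_add,finite} poly. degree c < n \<and> hamming_weight c \<le> t}
           = (\<Sum>i\<le>t. (n choose i) * (card (UNIV :: 'a set) - 1) ^ i)"
proof -
  have "{c :: 'a poly. degree c < n \<and> hamming_weight c \<le> t}
          = (\<Union>i\<le>t. {c. degree c < n \<and> hamming_weight c = i})"
    by auto
  also have "card \<dots> = (\<Sum>i\<le>t. card {c :: 'a poly. degree c < n \<and> hamming_weight c = i})"
    by (rule card_UN_disjoint) (auto intro: finite_subset[OF _ finite_degree_less])
  also have "\<dots> = (\<Sum>i\<le>t. (n choose i) * (card (UNIV :: 'a set) - 1) ^ i)"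
    by (rule sum.cong) (simp_all only: card_hamming_sphere[OF assms])
  finally show ?thesis .
qed

lemma exists_multiple_of_small_weight:
  fixes g :: "'a::{field,finite} poly"
  assumes "0 < degree g"
    and "card (UNIV :: 'a set) ^ degree g < card {c :: 'a poly. degree c < n \<and> hamming_weight c \<le> t}"
  shows "\<exists>c. c \<noteq> 0 \<and> degree c < n \<and> g dvd c \<and> hamming_weight c \<le> 2 * t"
proof -
  let ?ball = "{c :: 'a poly. degree c < n \<and> hamming_weight c \<le> t}"
  have "g \<noteq> 0"
    using assms(1) by auto
  then have "degree (w mod g) < degree g" for w
    using assms(1) degree_mod_less'[of g w] by (cases "w mod g = 0") auto
  then have residues: "(\<lambda>w. w mod g) ` ?ball \<subseteq> {r. degree r < degree g}"
    by auto
  then have "\<not> inj_on (\<lambda>w. w mod g) ?ball"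
  proof (intro notI)
    assume "inj_on (\<lambda>w. w mod g) ?ball"
    then have "card ?ball \<le> card {r :: 'a poly. degree r < degree g}"
      using residues finite_degree_less by (rule card_inj_on_le)
    with card_degree_less_le[of "degree g", where 'a='a] assms(2) show False
      by linarith
  qed
  then obtain w1 w2 where w: "w1 \<in> ?ball" "w2 \<in> ?ball" "w1 \<noteq> w2" "w1 mod g = w2 mod g"
    unfolding inj_on_def by blast
  have "degree (w1 - w2) < n"
    using w(1,2) le_less_trans[OF degree_diff_le_max[of w1 w2]] by auto
  moreover have "g dvd w1 - w2"
    using w(4) by (simp add: mod_eq_dvd_iff)
  moreover have "hamming_weight (w1 - w2) \<le> 2 * t"
    using w(1,2) hamming_weight_diff_le[of w1 w2] by simp
  ultimately show ?thesis
    using w(3) by (intro exI[of _ "w1 - w2"]) simp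
qed

lemma vandermonde_sum_eq_0:
  fixes b y :: "'i \<Rightarrow> 'a::field"
  assumes "finite S" "card S \<le> k" "inj_on y S"
    and "\<And>t. t < k \<Longrightarrow> (\<Sum>j\<in>S. b j * y j ^ t) = 0"
    and "i \<in> S"
  shows "b i = 0"
proof -
  define P where "P = (\<Prod>j\<in>S - {i}. [:- y j, 1:])"
  have "degree P = card S - 1"
    unfolding P_def using assms(1,5) by (simp add: degree_prod_sum_eq)
  moreover have "card S > 0"
    using assms(1,5) card_gt_0_iff by blast
  ultimately have "degree P < k"
    using assms(2) by linarith
  have "(\<Sum>j\<in>S. b j * poly P (y j)) = (\<Sum>t\<le>degree P. coeff P t * (\<Sum>j\<in>S. b j * y j ^ t))"
    by (simp add: poly_altdef sum_distrib_left mult_ac sum.swap[of _ S])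
  also have "\<dots> = 0"
    using \<open>degree P < k\<close> assms(4) by simp
  finally have "(\<Sum>j\<in>S. b j * poly P (y j)) = 0" .
  moreover have "poly P (y j) = 0" if "j \<in> S - {i}" for j
    unfolding P_def poly_prod using that assms(1) by (auto intro!: prod_zero bexI[of _ j])
  ultimately have "b i * poly P (y i) = 0"
    using sum.remove[OF assms(1,5), of "\<lambda>j. b j * poly P (y j)"] by simp
  moreover have "poly P (y i) \<noteq> 0"
    unfolding P_def poly_prod using assms(1,3,5) by (auto dest: inj_onD)
  ultimately show ?thesis
    by simp
qed

context field_extension
begin

lemma aeval_eq_sum_support:
  "aeval c x = (\<Sum>i\<in>poly_support c. emb (coeff c i) * x ^ i)"
proof -
  have "aeval c x = (\<Sum>i\<le>degree c. emb (coeff c i) * x ^ i)"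
    by (simp add: poly_altdef coeff_map_poly)
  also have "\<dots> = (\<Sum>i\<in>poly_support c. emb (coeff c i) * x ^ i)"
    by (rule sum.mono_neutral_right) (auto simp: poly_support_def le_degree)
  finally show ?thesis .
qed

lemma bch_bound:
  assumes "c \<noteq> 0" "degree c < n" "inj_on (\<lambda>i. \<zeta> ^ i) {..<n}" "\<delta> \<noteq> 0"
    and "\<And>t. t < k \<Longrightarrow> aeval c (\<delta> * \<zeta> ^ t) = 0"
  shows "k < hamming_weight c"
proof (rule ccontr)
  define S where "S = poly_support c"
  assume "\<not> k < hamming_weight c"
  then have "card S \<le> k"
    by (simp add: S_def hamming_weight_eq_card_poly_support)
  moreover have "inj_on (\<lambda>i. \<zeta> ^ i) S"
    unfolding S_def by (rule inj_on_subset[OF assms(3) poly_support_subset_lessThan[OF assms(2)]])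
  moreover have "(\<Sum>i\<in>S. emb (coeff c i) * \<delta> ^ i * (\<zeta> ^ i) ^ t) = 0" if "t < k" for t
    using assms(5)[OF that] unfolding aeval_eq_sum_support S_def
    by (simp add: power_mult_distrib mult.assoc mult.commute[of t] flip: power_mult)
  moreover obtain i where "i \<in> S"
    using assms(1) leading_coeff_0_iff unfolding S_def poly_support_def by blast
  \<comment> \<open>The numbers \<open>emb (coeff c i) * \<delta> ^ i\<close> solve a Vandermonde system in the nodes \<open>\<zeta> ^ i\<close>.\<close>
  ultimately have "emb (coeff c i) * \<delta> ^ i = 0"
    using vandermonde_sum_eq_0[of S k "\<lambda>i. \<zeta> ^ i" "\<lambda>i. emb (coeff c i) * \<delta> ^ i"]
      finite_poly_support
    unfolding S_def by blast
  then show False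
    using \<open>i \<in> S\<close> assms(4) unfolding S_def poly_support_def by simp
qed

end

lemma primitive_root_of_unity_nonzero:
  assumes "primitive_root_of_unity N b"
  shows "b \<noteq> 0"
  using assms unfolding primitive_root_of_unity_def by (metis power_0_left zero_neq_one)

lemma inj_on_power_primitive_root_of_unity:
  assumes "primitive_root_of_unity N b"
  shows "inj_on (\<lambda>e. b ^ e) {..<N}"
proof -
  have "b ^ i \<noteq> b ^ j" if "i < j" "j < N" for i j
  proof
    assume "b ^ i = b ^ j"
    also have "b ^ j = b ^ i * b ^ (j - i)"
      using that(1) by (simp flip: power_add)
    finally have "b ^ (j - i) = 1"
      using primitive_root_of_unity_nonzero[OF assms] by simp
    with that show False
      using assms unfolding primitive_root_of_unity_def by auto
  qed
  then show ?thesis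
    by (intro inj_onI) (metis lessThan_iff nat_neq_iff)
qed

lemma primitive_root_of_unity_power:
  assumes "primitive_root_of_unity (k * N) b" "0 < k"
  shows "primitive_root_of_unity N (b ^ k)"
  using assms unfolding primitive_root_of_unity_def by (auto simp flip: power_mult)

locale negacyclic_bch_q5 =
  fixes emb :: "'f::{field_gcd,finite} \<Rightarrow> 'e::field" and \<beta> :: 'e and m n :: nat
  assumes card_base_field_5: "card (UNIV :: 'f set) = 5"
    and m_ge_2: "2 \<le> m"
    and n_def: "n = (5 ^ m - 1) div 2"
    and field_embedding_emb: "field_embedding emb"
    and primitive: "primitive_root_of_unity (2 * n) \<beta>"
begin

sublocale prime_field_extension emb 5
  by unfold_locales (simp_all add: field_embedding_emb card_base_field_5)

abbreviation "M1 \<equiv> minimal_poly emb \<beta>"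
abbreviation "M3 \<equiv> minimal_poly emb (\<beta> ^ 3)"
abbreviation "code \<equiv> {c. degree c < n \<and> M1 * M3 dvd c}"

lemma five_pow_m: "5 ^ m = 2 * n + 1"
proof -
  have "even ((5::nat) ^ m - 1)"
    by simp
  then show ?thesis
    unfolding n_def by simp
qed

lemma n_ge_12: "12 \<le> n"
proof -
  have "(5::nat) ^ 2 \<le> 5 ^ m"
    using m_ge_2 by (rule power_increasing) simp
  then show ?thesis
    using five_pow_m by simp
qed

lemma beta_pow_2n: "\<beta> ^ (2 * n) = 1"
  using primitive unfolding primitive_root_of_unity_def by simp

lemma beta_nonzero: "\<beta> \<noteq> 0"
  using primitive by (rule primitive_root_of_unity_nonzero)

lemma inj_on_beta_pow: "inj_on (\<lambda>e. \<beta> ^ e) {..<2 * n}"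
  using primitive by (rule inj_on_power_primitive_root_of_unity)

lemma beta_pow_n: "\<beta> ^ n = -1"
proof -
  have "(\<beta> ^ n) ^ 2 = 1"
    using beta_pow_2n by (simp add: power_mult[symmetric] mult.commute)
  moreover have "\<beta> ^ n \<noteq> 1"
    using primitive n_ge_12 unfolding primitive_root_of_unity_def by auto
  ultimately show ?thesis
    using power2_eq_1_iff by blast
qed

lemma beta_pow_pow_5m: "(\<beta> ^ r) ^ 5 ^ m = \<beta> ^ r"
proof -
  have "\<beta> ^ 5 ^ m = \<beta>"
    using beta_pow_2n five_pow_m by simp
  then show ?thesis
    by (metis mult.commute power_mult)
qed

lemma conjugate_exponent_less: "j < m \<Longrightarrow> 3 * 5 ^ j < 2 * n"
proof -
  assume "j < m"
  then have "5 * (5::nat) ^ j \<le> 5 ^ m"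
    using power_increasing[of "Suc j" m "5::nat"] by simp
  moreover have "0 < (5::nat) ^ j"
    by simp
  ultimately show ?thesis
    using five_pow_m by linarith
qed

lemma inj_on_conjugate_exponents:
  assumes "0 < r" "r \<le> 3"
  shows "inj_on (\<lambda>j. (\<beta> ^ r) ^ 5 ^ j) {..<m}"
proof (rule inj_onI)
  fix i j
  assume ij: "i \<in> {..<m}" "j \<in> {..<m}" and "(\<beta> ^ r) ^ 5 ^ i = (\<beta> ^ r) ^ 5 ^ j"
  then have "\<beta> ^ (r * 5 ^ i) = \<beta> ^ (r * 5 ^ j)"
    by (simp add: power_mult)
  moreover have "r * 5 ^ k < 2 * n" if "k < m" for k
    using conjugate_exponent_less[OF that] assms(2) by (meson le_less_trans mult_le_mono1)
  ultimately have "r * 5 ^ i = r * 5 ^ j"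
    using ij by (intro inj_onD[OF inj_on_beta_pow]) auto
  then show "i = j"
    using assms(1) by simp
qed

lemma conjugates_disjoint:
  assumes "i < m" "j < m"
  shows "\<beta> ^ 5 ^ i \<noteq> (\<beta> ^ 3) ^ 5 ^ j"
proof
  assume "\<beta> ^ 5 ^ i = (\<beta> ^ 3) ^ 5 ^ j"
  then have "\<beta> ^ 5 ^ i = \<beta> ^ (3 * 5 ^ j)"
    by (simp add: power_mult)
  moreover have "5 ^ i < 2 * n"
    using conjugate_exponent_less[OF assms(1)] by linarith
  ultimately have "(5::nat) ^ i = 3 * 5 ^ j"
    using conjugate_exponent_less[OF assms(2)] by (intro inj_onD[OF inj_on_beta_pow]) auto
  then have "(3::nat) dvd 5 ^ i"
    by simp
  then show False
    using prime_dvd_power[of "3::nat" 5 i] by simp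
qed

lemma is_minimal_poly_beta_pow: "is_minimal_poly (\<beta> ^ r) (minimal_poly emb (\<beta> ^ r))"
  using minimal_poly_degree_le(1)[OF beta_pow_pow_5m] m_ge_2 by simp

lemma is_minimal_poly_beta: "is_minimal_poly \<beta> M1"
  using is_minimal_poly_beta_pow[of 1] by simp

lemma degree_minimal_poly_beta_pow:
  "0 < r \<Longrightarrow> r \<le> 3 \<Longrightarrow> degree (minimal_poly emb (\<beta> ^ r)) = m"
  using degree_minimal_poly[OF beta_pow_pow_5m _ inj_on_conjugate_exponents] m_ge_2 by simp

lemma minimal_poly_beta_pow_5: "minimal_poly emb (\<beta> ^ 5) = M1"
proof (rule minimal_poly_cong)
  fix r
  have "(\<beta> ^ 5) ^ 5 ^ (m - 1) = \<beta> ^ 5 ^ m"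
    using m_ge_2 by (simp flip: power_mult power_Suc)
  then show "aeval r (\<beta> ^ 5) = 0 \<longleftrightarrow> aeval r \<beta> = 0"
    using conjugate_root[of r \<beta> 1] conjugate_root[of r "\<beta> ^ 5" "m - 1"] beta_pow_pow_5m[of 1]
    by auto
qed

lemma coprime_minimal_polys: "coprime M1 M3"
proof -
  define Z where "Z j = (\<lambda>i. (\<beta> ^ j) ^ 5 ^ i) ` {..<m}" for j
  have "is_unit (gcd M1 M3)"
  proof (rule ccontr)
    assume not_unit: "\<not> is_unit (gcd M1 M3)"
    have "aeval (gcd M1 M3) \<beta> = 0" "aeval (gcd M1 M3) (\<beta> ^ 3) = 0"
      using is_minimal_poly_divisor_root[OF is_minimal_poly_beta _ not_unit]
        is_minimal_poly_divisor_root[OF is_minimal_poly_beta_pow[of 3] _ not_unit] by simp_all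
    have "Z 1 \<inter> Z 3 = {}"
      unfolding Z_def using conjugates_disjoint by auto
    then have "2 * m = card (Z 1 \<union> Z 3)"
      unfolding Z_def
      using card_image[OF inj_on_conjugate_exponents[of 1]] card_image[OF inj_on_conjugate_exponents[of 3]]
      by (simp add: card_Un_disjoint)
    also have "\<dots> \<le> degree (gcd M1 M3)"
      using \<open>aeval (gcd M1 M3) \<beta> = 0\<close> \<open>aeval (gcd M1 M3) (\<beta> ^ 3) = 0\<close> is_minimal_polyD(2)[OF is_minimal_poly_beta]
      unfolding Z_def by (intro card_roots_le_degree) (auto intro: conjugate_root)
    also have "\<dots> \<le> degree M1"
      using is_minimal_polyD(2)[OF is_minimal_poly_beta] by (intro dvd_imp_degree_le) auto
    also have "\<dots> = m"
      using degree_minimal_poly_beta_pow[of 1] by simp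
    finally show False
      using m_ge_2 by simp
  qed
  then show ?thesis
    using is_unit_gcd by blast
qed

lemma lcm_minimal_polys: "lcm (lcm M1 M3) (minimal_poly emb (\<beta> ^ 5)) = M1 * M3"
proof -
  have "lead_coeff (M1 * M3) = 1"
    using is_minimal_polyD(1)[OF is_minimal_poly_beta] is_minimal_polyD(1)[OF is_minimal_poly_beta_pow[of 3]]
    by (simp add: lead_coeff_mult)
  then have "normalize (M1 * M3) = M1 * M3"
    by (simp add: normalize_poly_eq_map_poly)
  then have "lcm M1 M3 = M1 * M3"
    by (simp add: lcm_coprime[OF coprime_minimal_polys])
  moreover have "lcm (M1 * M3) M1 = normalize (M1 * M3)"
    by (rule lcm_proj1_if_dvd) simp
  ultimately show ?thesis
    using \<open>normalize (M1 * M3) = M1 * M3\<close> minimal_poly_beta_pow_5 by simp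
qed

lemma generator_dvd_modulus: "M1 * M3 dvd monom 1 n + 1"
proof -
  have aeval_modulus: "aeval (monom 1 n + 1) x = x ^ n + 1" for x
    by (simp add: map_poly_emb_add map_poly_monom poly_monom)
  have "M1 dvd monom 1 n + 1"
    by (rule is_minimal_poly_dvd[OF is_minimal_poly_beta]) (simp add: aeval_modulus beta_pow_n)
  moreover have "(\<beta> ^ 3) ^ n = (\<beta> ^ n) ^ 3"
    by (simp flip: power_mult add: mult.commute)
  then have "M3 dvd monom 1 n + 1"
    by (intro is_minimal_poly_dvd[OF is_minimal_poly_beta_pow]) (simp add: aeval_modulus beta_pow_n)
  ultimately show ?thesis
    using coprime_minimal_polys by (rule divides_mult)
qed

lemma generator_nonzero: "M1 * M3 \<noteq> 0"
  using is_minimal_polyD(2)[OF is_minimal_poly_beta] is_minimal_polyD(2)[OF is_minimal_poly_beta_pow[of 3]]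
  by simp

lemma degree_generator: "degree (M1 * M3) = 2 * m"
  using generator_nonzero degree_minimal_poly_beta_pow[of 1] degree_minimal_poly_beta_pow[of 3]
  by (simp add: degree_mult_eq)

lemma C_q_n_4_0_eq: "C_q_n_4_0 emb \<beta> n = code"
  unfolding C_q_n_4_0_def lcm_minimal_polys
  using generator_dvd_modulus n_ge_12 by (simp add: negacyclic_code_eq_multiples)

lemma two_m_le_n: "2 * m \<le> n"
  using dvd_imp_degree_le[OF generator_dvd_modulus] degree_generator n_ge_12
  by (simp add: degree_negacyclic_modulus negacyclic_modulus_nonzero)

lemma subspace_code: "poly_vs.subspace code"
  using n_ge_12 by (intro subspace_multiples) simp

lemma dim_code: "poly_vs.dim code = n - 2 * m"
  using dim_multiples[OF generator_nonzero] degree_generator two_m_le_n by simp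

lemma code_weight_gt_3:
  assumes "c \<in> code" "c \<noteq> 0"
  shows "3 < hamming_weight c"
proof (rule bch_bound)
  show "inj_on (\<lambda>i. (\<beta> ^ 2) ^ i) {..<n}"
    using primitive by (intro inj_on_power_primitive_root_of_unity primitive_root_of_unity_power) auto
  obtain h where c: "c = M1 * M3 * h"
    using assms(1) by blast
  have "aeval M1 \<beta> = 0" "aeval M1 (\<beta> ^ 5) = 0" "aeval M3 (\<beta> ^ 3) = 0"
    using is_minimal_polyD(3)[OF is_minimal_poly_beta] conjugate_root[of M1 \<beta> 1]
      is_minimal_polyD(3)[OF is_minimal_poly_beta_pow[of 3]] by simp_all
  then have roots: "aeval c (\<beta> ^ k) = 0" if "k \<in> {1, 3, 5}" for k
    using that unfolding c by auto
  show "aeval c (\<beta> * (\<beta> ^ 2) ^ t) = 0" if "t < 3" for t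
  proof -
    have "aeval c (\<beta> ^ (2 * t + 1)) = 0"
      using that by (intro roots) auto
    then show ?thesis
      by (simp add: power_mult)
  qed
qed (use assms beta_nonzero in auto)

lemma redundancy_lt_ball_volume: "5 ^ (2 * m) < (\<Sum>i\<le>2. (n choose i) * 4 ^ i)"
proof -
  have "2 * (n choose 2) = n * (n - 1)"
    by (cases "even n") (auto simp: choose_two)
  moreover have "(5::nat) ^ (2 * m) = (5 ^ m) ^ 2"
    unfolding power_mult[symmetric] by (simp add: mult.commute)
  then have "(5::nat) ^ (2 * m) = 4 * (n * n) + 4 * n + 1"
    by (simp add: five_pow_m power2_eq_square algebra_simps)
  moreover have "12 * n \<le> n * n"
    using n_ge_12 by simp
  moreover have "(\<Sum>i\<le>2. (n choose i) * 4 ^ i) = 1 + 4 * n + 16 * (n choose 2)"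
    by (simp add: numeral_2_eq_2)
  moreover have "n * (n - 1) = n * n - n"
    by (simp add: diff_mult_distrib2)
  ultimately show ?thesis
    using n_ge_12 by linarith
qed

lemma minimum_distance_code: "minimum_distance code = 4"
proof -
  have "5 ^ degree (M1 * M3) < card {c :: 'f poly. degree c < n \<and> hamming_weight c \<le> 2}"
    using redundancy_lt_ball_volume card_hamming_ball[of n 2, where 'a='f] n_ge_12
    by (simp add: degree_generator card_base_field_5)
  then obtain c where c: "c \<noteq> 0" "degree c < n" "M1 * M3 dvd c" "hamming_weight c \<le> 4"
    using exists_multiple_of_small_weight[of "M1 * M3" n 2] degree_generator m_ge_2
    by (auto simp: card_base_field_5)
  show ?thesis
  proof (rule minimum_distance_linear_code)
    show "poly_vs.subspace code"
      by (rule subspace_code)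
    show "4 \<le> hamming_weight c" if "c \<in> code" "c \<noteq> 0" for c
      using code_weight_gt_3[OF that] by simp
    then show "hamming_weight c = 4"
      using c by fastforce
  qed (use c in auto)
qed

lemma sphere_packing_optimal: "sphere_packing_distance_optimal 5 n (n - 2 * m) 4"
proof -
  have "(5::nat) ^ n = 5 ^ (n - 2 * m) * 5 ^ (2 * m)"
    using two_m_le_n by (simp flip: power_add)
  also have "\<dots> < 5 ^ (n - 2 * m) * (\<Sum>i\<le>2. (n choose i) * 4 ^ i)"
    using redundancy_lt_ball_volume by simp
  finally show ?thesis
    unfolding sphere_packing_distance_optimal_def sphere_packing_bound_holds_def by simp
qed

end

theorem theorem41:
  fixes emb :: "'f::{field_gcd,finite} \<Rightarrow> 'e::field"
    and \<beta> :: 'e and m n :: nat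
  assumes "card (UNIV :: 'f set) = 5"
    and "m \<ge> 2"
    and "n = (5 ^ m - 1) div 2"
    and "field_embedding emb"
    and "primitive_root_of_unity (2 * n) \<beta>"
  shows "lcm (lcm (minimal_poly emb \<beta>) (minimal_poly emb (\<beta> ^ 3))) (minimal_poly emb (\<beta> ^ 5))
           = minimal_poly emb \<beta> * minimal_poly emb (\<beta> ^ 3)
         \<and> linear_code_params (C_q_n_4_0 emb \<beta> n) n (n - 2 * m) 4
         \<and> sphere_packing_distance_optimal 5 n (n - 2 * m) 4"
proof -
  interpret negacyclic_bch_q5 emb \<beta> m n
    using assms by unfold_locales
  show ?thesis
    unfolding linear_code_params_def C_q_n_4_0_eq
    using lcm_minimal_polys subspace_code dim_code minimum_distance_code sphere_packing_optimal
    by auto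
qed

end
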